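(* Let $V$ be a crossed module and $M$ an abelian $\pi_0(V)$-module. Then $H^1(V,M)\cong H^1(\pi_0(V),M)$.
   Context: A crossed module $V$: group $G_V$, group $M_V$ with left $G_V$-action ${}^gm$, homomorphism $\mu:M_V\to G_V$ with $\mu({}^gm)=g\mu(m)g^{-1}$ and ${}^{\mu(n)}m=nmn^{-1}$; $\pi_0(V)=G_V/\mu(M_V)$, $\bar g$ the class of $g$. The cochain complex of $V$ with coefficients in $M$ begins $C^0=M$, $C^1=\mathrm{Map}(G_V,M)$, $C^2=\mathrm{Map}(M_V\times G_V\times G_V,M)$ with $(dc)(g)=c-\bar g\cdot c$ and $(dc)(m,h,g)=c(\mu(m)h)-c(hg)+\bar h\cdot c(g)$; $H^1(V,M)$ is its first cohomology. $H^1(\pi_0(V),M)$ is ordinary group cohomology. *)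

theory Defs
  imports "HOL-Algebra.Algebra" "HOL-Library.FuncSet"
begin

definition crossed_module ::
  "('g, 'x) monoid_scheme \<Rightarrow> ('m, 'y) monoid_scheme \<Rightarrow> ('g \<Rightarrow> 'm \<Rightarrow> 'm) \<Rightarrow> ('m \<Rightarrow> 'g) \<Rightarrow> bool"
where
  "crossed_module G Mv act mu \<longleftrightarrow>
     group G \<and> group Mv \<and> mu \<in> hom Mv G \<and>
     (\<forall>g\<in>carrier G. act g \<in> hom Mv Mv) \<and>
     (\<forall>m\<in>carrier Mv. act \<one>\<^bsub>G\<^esub> m = m) \<and>
     (\<forall>g\<in>carrier G. \<forall>h\<in>carrier G. \<forall>m\<in>carrier Mv.
        act (g \<otimes>\<^bsub>G\<^esub> h) m = act g (act h m)) \<and>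
     (\<forall>g\<in>carrier G. \<forall>m\<in>carrier Mv.
        mu (act g m) = g \<otimes>\<^bsub>G\<^esub> mu m \<otimes>\<^bsub>G\<^esub> inv\<^bsub>G\<^esub> g) \<and>
     (\<forall>n\<in>carrier Mv. \<forall>m\<in>carrier Mv.
        act (mu n) m = n \<otimes>\<^bsub>Mv\<^esub> m \<otimes>\<^bsub>Mv\<^esub> inv\<^bsub>Mv\<^esub> n)"

definition pi0 :: "('g, 'x) monoid_scheme \<Rightarrow> ('m, 'y) monoid_scheme \<Rightarrow> ('m \<Rightarrow> 'g) \<Rightarrow> 'g set monoid"
  where "pi0 G Mv mu = G Mod (mu ` carrier Mv)"

definition cls :: "('g, 'x) monoid_scheme \<Rightarrow> ('m, 'y) monoid_scheme \<Rightarrow> ('m \<Rightarrow> 'g) \<Rightarrow> 'g \<Rightarrow> 'g set"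
  where "cls G Mv mu g = (mu ` carrier Mv) #>\<^bsub>G\<^esub> g"

text \<open>An abelian P-module: an abelian group M (written multiplicatively) with a left
  action rho of the group P by group automorphisms.\<close>
definition group_module ::
  "('p, 'x) monoid_scheme \<Rightarrow> ('a, 'y) monoid_scheme \<Rightarrow> ('p \<Rightarrow> 'a \<Rightarrow> 'a) \<Rightarrow> bool"
where
  "group_module P M rho \<longleftrightarrow>
     group P \<and> comm_group M \<and>
     (\<forall>x\<in>carrier P. rho x \<in> hom M M) \<and>
     (\<forall>a\<in>carrier M. rho \<one>\<^bsub>P\<^esub> a = a) \<and>
     (\<forall>x\<in>carrier P. \<forall>y\<in>carrier P. \<forall>a\<in>carrier M.
        rho (x \<otimes>\<^bsub>P\<^esub> y) a = rho x (rho y a))"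

definition fun_group :: "'b set \<Rightarrow> ('a, 'y) monoid_scheme \<Rightarrow> ('b \<Rightarrow> 'a) monoid"
  where "fun_group A M =
    \<lparr>carrier = A \<rightarrow>\<^sub>E carrier M,
     monoid.mult = (\<lambda>f g. \<lambda>x\<in>A. f x \<otimes>\<^bsub>M\<^esub> g x),
     one = (\<lambda>x\<in>A. \<one>\<^bsub>M\<^esub>)\<rparr>"

text \<open>Cohomology of the crossed module V with coefficients in the pi_0(V)-module M:
  1-cocycles are the c in C^1 = Map(G,M) with dc = 0 in C^2, where
  (dc)(m,h,g) = c(mu(m) h) - c(h g) + [h].c(g); 1-coboundaries are the maps
  g \<mapsto> a - [g].a for a in C^0 = M.\<close>
definition Z1_cm where
  "Z1_cm G Mv mu M rho =
    {c \<in> carrier G \<rightarrow>\<^sub>E carrier M.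
       \<forall>m\<in>carrier Mv. \<forall>h\<in>carrier G. \<forall>g\<in>carrier G.
         c (mu m \<otimes>\<^bsub>G\<^esub> h) \<otimes>\<^bsub>M\<^esub> inv\<^bsub>M\<^esub> (c (h \<otimes>\<^bsub>G\<^esub> g))
           \<otimes>\<^bsub>M\<^esub> rho (cls G Mv mu h) (c g) = \<one>\<^bsub>M\<^esub>}"

definition B1_cm where
  "B1_cm G Mv mu M rho =
    {(\<lambda>g\<in>carrier G. a \<otimes>\<^bsub>M\<^esub> inv\<^bsub>M\<^esub> (rho (cls G Mv mu g) a)) | a. a \<in> carrier M}"

definition H1_cm where
  "H1_cm G Mv mu M rho =
    ((fun_group (carrier G) M)\<lparr>carrier := Z1_cm G Mv mu M rho\<rparr>) Mod B1_cm G Mv mu M rho"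

definition Z1_grp where
  "Z1_grp P M rho =
    {f \<in> carrier P \<rightarrow>\<^sub>E carrier M.
       \<forall>x\<in>carrier P. \<forall>y\<in>carrier P.
         f (x \<otimes>\<^bsub>P\<^esub> y) = f x \<otimes>\<^bsub>M\<^esub> rho x (f y)}"

definition B1_grp where
  "B1_grp P M rho =
    {(\<lambda>x\<in>carrier P. rho x a \<otimes>\<^bsub>M\<^esub> inv\<^bsub>M\<^esub> a) | a. a \<in> carrier M}"

definition H1_grp where
  "H1_grp P M rho =
    ((fun_group (carrier P) M)\<lparr>carrier := Z1_grp P M rho\<rparr>) Mod B1_grp P M rho"

end

theory Submission
  imports Defs
begin

(* Write N = mu(Mv), P = pi_0(V) = G/N and [g] for the class of g.  Evaluating the
   crossed-module cocycle condition at m = 1 shows that a 1-cocycle c : G -> M is a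
   crossed homomorphism for the action of G through [_]; comparing it with the case
   g = 1 shows that c is constant on N-cosets.  Conversely such maps satisfy the
   cocycle condition.  Hence the crossed-module 1-cocycles are exactly the inflations
   f o [_] of crossed homomorphisms f : P -> M, and the coboundary g |-> a - [g]a is
   the inflation of the principal crossed homomorphism x |-> x(-a) - (-a). *)

section \<open>Subquotients of abelian groups\<close>

lemma comm_group_fun_group:
  assumes "comm_group M"
  shows "comm_group (fun_group A M)"
proof -
  interpret M: comm_group M by fact
  show ?thesis
  proof (rule comm_groupI)
    fix f g assume "f \<in> carrier (fun_group A M)" "g \<in> carrier (fun_group A M)"
    then show "f \<otimes>\<^bsub>fun_group A M\<^esub> g \<in> carrier (fun_group A M)"
      by (auto simp: fun_group_def)
  next
    show "\<one>\<^bsub>fun_group A M\<^esub> \<in> carrier (fun_group A M)"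
      by (auto simp: fun_group_def)
  next
    fix f g h
    assume "f \<in> carrier (fun_group A M)" "g \<in> carrier (fun_group A M)"
      "h \<in> carrier (fun_group A M)"
    then show "f \<otimes>\<^bsub>fun_group A M\<^esub> g \<otimes>\<^bsub>fun_group A M\<^esub> h =
        f \<otimes>\<^bsub>fun_group A M\<^esub> (g \<otimes>\<^bsub>fun_group A M\<^esub> h)"
      by (auto simp: fun_group_def M.m_assoc PiE_iff intro!: ext)
  next
    fix f g assume "f \<in> carrier (fun_group A M)" "g \<in> carrier (fun_group A M)"
    then show "f \<otimes>\<^bsub>fun_group A M\<^esub> g = g \<otimes>\<^bsub>fun_group A M\<^esub> f"
      by (auto simp: fun_group_def M.m_comm PiE_iff intro!: ext)
  next
    fix f assume "f \<in> carrier (fun_group A M)"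
    then show "\<one>\<^bsub>fun_group A M\<^esub> \<otimes>\<^bsub>fun_group A M\<^esub> f = f"
      by (auto simp: fun_group_def PiE_iff extensional_def intro!: ext)
  next
    fix f assume f: "f \<in> carrier (fun_group A M)"
    show "\<exists>g\<in>carrier (fun_group A M). g \<otimes>\<^bsub>fun_group A M\<^esub> f = \<one>\<^bsub>fun_group A M\<^esub>"
      by (rule bexI[of _ "\<lambda>x\<in>A. inv\<^bsub>M\<^esub> f x"])
        (use f in \<open>auto simp: fun_group_def PiE_iff intro!: ext\<close>)
  qed
qed

lemma fun_group_inv:
  assumes "comm_group M" and "f \<in> carrier (fun_group A M)"
  shows "inv\<^bsub>fun_group A M\<^esub> f = (\<lambda>x\<in>A. inv\<^bsub>M\<^esub> f x)"
proof -
  interpret M: comm_group M by fact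
  interpret F: comm_group "fun_group A M" by (rule comm_group_fun_group) fact
  show ?thesis
    by (rule F.inv_equality) (use assms(2) in \<open>auto simp: fun_group_def PiE_iff intro!: ext\<close>)
qed

text \<open>In additive notation \<open>x - y + z = 0 \<longleftrightarrow> y = x + z\<close>: this turns the crossed-module
  cocycle condition into an equation for \<open>c (h g)\<close>.\<close>
lemma (in comm_group) diff_add_eq_one_iff:
  assumes "x \<in> carrier G" "y \<in> carrier G" "z \<in> carrier G"
  shows "x \<otimes> inv y \<otimes> z = \<one> \<longleftrightarrow> y = x \<otimes> z"
proof -
  have "x \<otimes> inv y \<otimes> z = (x \<otimes> z) \<otimes> inv y"
    using assms by (simp add: m_ac)
  then show ?thesis
    using assms by (metis inv_closed m_closed r_inv inv_equality)
qed

lemma (in comm_group) subgroup_normal_in_subgroup: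
  assumes "subgroup B G" "subgroup Z G" "B \<subseteq> Z"
  shows "B \<lhd> G\<lparr>carrier := Z\<rparr>"
proof -
  have "comm_group (G\<lparr>carrier := Z\<rparr>)"
    by (rule group.group_comm_groupI[OF subgroup_imp_group[OF assms(2)]])
      (use assms(2) in \<open>auto simp: m_comm subgroup.mem_carrier\<close>)
  then show ?thesis
    by (rule comm_group.subgroup_imp_normal[OF _ subgroup_incl[OF assms]])
qed

text \<open>An injective homomorphism of abelian groups maps the subquotient \<open>Z/B\<close>
  isomorphically onto \<open>h(Z)/h(B)\<close>: the composite of \<open>h\<close> with the quotient map is onto
  and its kernel is \<open>B\<close>.\<close>
lemma iso_subquotient_image:
  assumes F: "comm_group F" and F': "comm_group F'"
    and h: "h \<in> hom F F'" and inj: "inj_on h (carrier F)"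
    and Z: "subgroup Z F" and B: "subgroup B F" and BZ: "B \<subseteq> Z"
  shows "F\<lparr>carrier := Z\<rparr> Mod B \<cong> F'\<lparr>carrier := h ` Z\<rparr> Mod (h ` B)"
proof -
  interpret F: comm_group F by (rule F)
  interpret F': comm_group F' by (rule F')
  interpret h: group_hom F F' h by unfold_locales (rule h)
  let ?Z = "F\<lparr>carrier := Z\<rparr>" and ?Z' = "F'\<lparr>carrier := h ` Z\<rparr>"
  have Z': "subgroup (h ` Z) F'" and B': "subgroup (h ` B) F'"
    using h.subgroup_img_is_subgroup Z B by auto
  have B'_normal: "h ` B \<lhd> ?Z'"
    using F'.subgroup_normal_in_subgroup[OF B' Z'] BZ by blast
  interpret B': normal "h ` B" ?Z' by (rule B'_normal)
  define q where "q c = h ` B #>\<^bsub>?Z'\<^esub> c" for c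
  have "h \<in> hom ?Z ?Z'"
    using Z by (auto simp: hom_def subgroup.mem_carrier)
  then have "q \<circ> h \<in> hom ?Z (?Z' Mod h ` B)"
    unfolding q_def by (rule hom_compose[OF _ B'.r_coset_hom_Mod])
  then interpret qh: group_hom ?Z "?Z' Mod h ` B" "q \<circ> h"
    using F.subgroup_imp_group[OF Z] B'.factorgroup_is_group
    by (simp add: group_hom_def group_hom_axioms_def)
  have onto: "(q \<circ> h) ` carrier ?Z = carrier (?Z' Mod h ` B)"
    by (simp add: carrier_FactGroup q_def image_comp)
  have "q (h f) = h ` B \<longleftrightarrow> f \<in> B" if f: "f \<in> Z" for f
  proof -
    have "q (h f) = h ` B \<longleftrightarrow> h f \<in> h ` B"
      using B'.rcos_self[of "h f"] B'.rcos_const[of "h f"] f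
      by (auto simp: q_def B'.subgroup_axioms)
    also have "\<dots> \<longleftrightarrow> f \<in> B"
      using inj f BZ subgroup.subset[OF Z] subgroup.subset[OF B]
      by (auto dest: inj_onD)
    finally show ?thesis .
  qed
  then have "kernel ?Z (?Z' Mod h ` B) (q \<circ> h) = B"
    using BZ by (auto simp: kernel_def)
  then show ?thesis
    using qh.FactGroup_iso[OF onto] by simp
qed

text \<open>The first Peiffer identity says that conjugating \<open>\<mu>(m)\<close> by \<open>g\<close> gives
  \<open>\<mu>(\<^sup>gm)\<close>, so \<open>\<mu>(M\<^sub>V)\<close> is a normal subgroup and \<open>\<pi>\<^sub>0(V)\<close> is a group.\<close>
lemma crossed_module_image_normal:
  assumes CM: "crossed_module G Mv act mu"
  shows "mu ` carrier Mv \<lhd> G"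
proof -
  interpret G: group G using CM by (simp add: crossed_module_def)
  interpret mu: group_hom Mv G mu
    using CM by (simp add: crossed_module_def group_hom_def group_hom_axioms_def)
  show ?thesis
    unfolding G.normal_inv_iff
  proof (intro conjI ballI)
    show "subgroup (mu ` carrier Mv) G" by (rule mu.img_is_subgroup)
    fix g n assume g: "g \<in> carrier G" and "n \<in> mu ` carrier Mv"
    then obtain m where m: "m \<in> carrier Mv" "n = mu m" by auto
    have "act g m \<in> carrier Mv"
      using CM g m by (auto simp: crossed_module_def hom_def)
    moreover have "mu (act g m) = g \<otimes>\<^bsub>G\<^esub> n \<otimes>\<^bsub>G\<^esub> inv\<^bsub>G\<^esub> g"
      using CM g m by (auto simp: crossed_module_def)
    ultimately show "g \<otimes>\<^bsub>G\<^esub> n \<otimes>\<^bsub>G\<^esub> inv\<^bsub>G\<^esub> g \<in> mu ` carrier Mv"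
      by (metis imageI)
  qed
qed

section \<open>Inflation along \<open>G \<rightarrow> \<pi>\<^sub>0(V)\<close>\<close>

text \<open>The cohomology of \<open>V\<close> only involves \<open>\<mu>\<close> through its image \<open>N\<close>; we therefore work
  with a map \<open>\<mu>\<close> whose image is normal and a \<open>G/N\<close>-module \<open>M\<close>.\<close>
locale inflation =
  fixes G :: "('g, 'x) monoid_scheme" and Mv :: "('m, 'y) monoid_scheme"
    and mu :: "'m \<Rightarrow> 'g"
    and M :: "('a, 'z) monoid_scheme" and rho :: "'g set \<Rightarrow> 'a \<Rightarrow> 'a"
  assumes image_normal: "mu ` carrier Mv \<lhd> G"
    and module: "group_module (pi0 G Mv mu) M rho"
begin

abbreviation "N \<equiv> mu ` carrier Mv"
abbreviation "P \<equiv> pi0 G Mv mu"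
abbreviation "cl \<equiv> cls G Mv mu"

sublocale G: normal N G by (rule image_normal)
sublocale M: comm_group M using module by (simp add: group_module_def)
sublocale P: group P using module by (simp add: group_module_def)

lemma cls_hom: "cl \<in> hom G P"
proof -
  have "cl = (\<lambda>g. N #>\<^bsub>G\<^esub> g)" by (simp add: cls_def fun_eq_iff)
  then show ?thesis using G.r_coset_hom_Mod by (simp add: pi0_def)
qed

lemma cls_carrier: "g \<in> carrier G \<Longrightarrow> cl g \<in> carrier P"
  using cls_hom by (rule hom_in_carrier)

lemma cls_mult: "g \<in> carrier G \<Longrightarrow> h \<in> carrier G \<Longrightarrow> cl (g \<otimes>\<^bsub>G\<^esub> h) = cl g \<otimes>\<^bsub>P\<^esub> cl h"
  using cls_hom by (rule hom_mult)

lemma carrier_P: "carrier P = cl ` carrier G"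
  by (simp add: cls_def pi0_def carrier_FactGroup)

lemma cls_one: "cl \<one>\<^bsub>G\<^esub> = \<one>\<^bsub>P\<^esub>"
  using cls_hom G.is_group P.is_group by (rule hom_one)

lemma mu_closed: "m \<in> carrier Mv \<Longrightarrow> mu m \<in> carrier G"
  using G.subset by blast

lemma cls_translate:
  assumes "m \<in> carrier Mv" "g \<in> carrier G"
  shows "cl (mu m \<otimes>\<^bsub>G\<^esub> g) = cl g"
proof -
  have "cl (mu m \<otimes>\<^bsub>G\<^esub> g) = cl (mu m) \<otimes>\<^bsub>P\<^esub> cl g"
    using assms by (simp add: cls_mult mu_closed)
  also have "cl (mu m) = \<one>\<^bsub>P\<^esub>"
    using G.rcos_const assms(1) by (simp add: cls_def pi0_def)
  finally show ?thesis using cls_carrier[OF assms(2)] by simp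
qed

lemma rho_group_hom: "x \<in> carrier P \<Longrightarrow> group_hom M M (rho x)"
  using module by (simp add: group_module_def group_hom_def group_hom_axioms_def M.is_group)

lemma rho_closed: "x \<in> carrier P \<Longrightarrow> a \<in> carrier M \<Longrightarrow> rho x a \<in> carrier M"
  using rho_group_hom by (rule group_hom.hom_closed)

lemma rho_mult: "x \<in> carrier P \<Longrightarrow> a \<in> carrier M \<Longrightarrow> b \<in> carrier M \<Longrightarrow>
    rho x (a \<otimes>\<^bsub>M\<^esub> b) = rho x a \<otimes>\<^bsub>M\<^esub> rho x b"
  using rho_group_hom by (rule group_hom.hom_mult)

lemma rho_inv: "x \<in> carrier P \<Longrightarrow> a \<in> carrier M \<Longrightarrow> rho x (inv\<^bsub>M\<^esub> a) = inv\<^bsub>M\<^esub> rho x a"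
  using rho_group_hom by (rule group_hom.hom_inv)

lemma rho_one: "x \<in> carrier P \<Longrightarrow> rho x \<one>\<^bsub>M\<^esub> = \<one>\<^bsub>M\<^esub>"
  using rho_group_hom by (rule group_hom.hom_one)

lemma rho_unit: "a \<in> carrier M \<Longrightarrow> rho \<one>\<^bsub>P\<^esub> a = a"
  using module by (simp add: group_module_def)

lemma rho_comp: "x \<in> carrier P \<Longrightarrow> y \<in> carrier P \<Longrightarrow> a \<in> carrier M \<Longrightarrow>
    rho (x \<otimes>\<^bsub>P\<^esub> y) a = rho x (rho y a)"
  using module by (simp add: group_module_def)

abbreviation "FP \<equiv> fun_group (carrier P) M"
abbreviation "FG \<equiv> fun_group (carrier G) M"

lemma Z1_grp_subgroup: "subgroup (Z1_grp P M rho) FP"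
proof -
  interpret F: comm_group FP by (rule comm_group_fun_group[OF M.comm_group_axioms])
  show ?thesis
  proof (rule F.subgroupI)
    show "Z1_grp P M rho \<subseteq> carrier FP" by (auto simp: Z1_grp_def fun_group_def)
    have "(\<lambda>x\<in>carrier P. \<one>\<^bsub>M\<^esub>) \<in> Z1_grp P M rho"
      by (auto simp: Z1_grp_def rho_one)
    then show "Z1_grp P M rho \<noteq> {}" by blast
  next
    fix f assume f: "f \<in> Z1_grp P M rho"
    then have "f \<in> carrier FP" by (auto simp: Z1_grp_def fun_group_def)
    then show "inv\<^bsub>FP\<^esub> f \<in> Z1_grp P M rho"
      unfolding fun_group_inv[OF M.comm_group_axioms \<open>f \<in> carrier FP\<close>] using f
      by (auto simp: Z1_grp_def PiE_iff rho_inv M.inv_mult rho_closed)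
  next
    fix f g assume "f \<in> Z1_grp P M rho" "g \<in> Z1_grp P M rho"
    then show "f \<otimes>\<^bsub>FP\<^esub> g \<in> Z1_grp P M rho"
      by (auto simp: Z1_grp_def fun_group_def PiE_iff rho_mult rho_closed M.m_ac)
  qed
qed

definition principal :: "'a \<Rightarrow> 'g set \<Rightarrow> 'a" where
  "principal a = (\<lambda>x\<in>carrier P. rho x a \<otimes>\<^bsub>M\<^esub> inv\<^bsub>M\<^esub> a)"

lemma B1_grp_eq: "B1_grp P M rho = principal ` carrier M"
  by (auto simp: B1_grp_def principal_def)

lemma principal_mult:
  "a \<in> carrier M \<Longrightarrow> b \<in> carrier M \<Longrightarrow>
    principal (a \<otimes>\<^bsub>M\<^esub> b) = principal a \<otimes>\<^bsub>FP\<^esub> principal b"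
  by (auto simp: principal_def fun_group_def rho_mult M.inv_mult rho_closed M.m_ac intro!: ext)

lemma B1_grp_subgroup: "subgroup (B1_grp P M rho) FP"
proof -
  interpret F: comm_group FP by (rule comm_group_fun_group[OF M.comm_group_axioms])
  have principal_carrier: "principal a \<in> carrier FP" if "a \<in> carrier M" for a
    using that by (auto simp: principal_def fun_group_def rho_closed)
  show ?thesis
    unfolding B1_grp_eq
  proof (rule F.subgroupI)
    show "principal ` carrier M \<subseteq> carrier FP" using principal_carrier by blast
    show "principal ` carrier M \<noteq> {}" by blast
  next
    fix f assume "f \<in> principal ` carrier M"
    then obtain a where a: "a \<in> carrier M" "f = principal a" by blast
    have "inv\<^bsub>FP\<^esub> f = principal (inv\<^bsub>M\<^esub> a)"
      unfolding a(2) fun_group_inv[OF M.comm_group_axioms principal_carrier[OF a(1)]]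
      using a(1) by (auto simp: principal_def rho_inv M.inv_mult rho_closed intro!: ext)
    then show "inv\<^bsub>FP\<^esub> f \<in> principal ` carrier M" using a(1) by simp
  next
    fix f g assume "f \<in> principal ` carrier M" "g \<in> principal ` carrier M"
    then show "f \<otimes>\<^bsub>FP\<^esub> g \<in> principal ` carrier M"
      by (auto simp: principal_mult[symmetric] intro!: imageI)
  qed
qed

lemma B1_grp_subset_Z1_grp: "B1_grp P M rho \<subseteq> Z1_grp P M rho"
proof
  fix f assume "f \<in> B1_grp P M rho"
  then obtain a where a: "a \<in> carrier M" "f = principal a" by (auto simp: B1_grp_eq)
  have "rho (x \<otimes>\<^bsub>P\<^esub> y) a \<otimes>\<^bsub>M\<^esub> inv\<^bsub>M\<^esub> a =
      (rho x a \<otimes>\<^bsub>M\<^esub> inv\<^bsub>M\<^esub> a) \<otimes>\<^bsub>M\<^esub> rho x (rho y a \<otimes>\<^bsub>M\<^esub> inv\<^bsub>M\<^esub> a)"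
    if "x \<in> carrier P" "y \<in> carrier P" for x y
    using that a(1) by (simp add: rho_comp rho_mult rho_inv rho_closed M.m_ac)
      (simp add: M.m_assoc[symmetric] rho_closed)
  then show "f \<in> Z1_grp P M rho"
    using a by (auto simp: Z1_grp_def principal_def rho_closed)
qed

text \<open>Inflation pulls a map on \<open>\<pi>\<^sub>0(V)\<close> back to \<open>G\<close> along the quotient map; it is an
  injective homomorphism of the cochain groups since the quotient map is onto.\<close>
definition inflate :: "('g set \<Rightarrow> 'a) \<Rightarrow> 'g \<Rightarrow> 'a" where
  "inflate f = (\<lambda>g\<in>carrier G. f (cl g))"

lemma inflate_hom: "inflate \<in> hom FP FG"
  by (auto simp: hom_def inflate_def fun_group_def PiE_iff cls_carrier intro!: ext)

lemma inflate_inj: "inj_on inflate (carrier FP)"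
proof (rule inj_onI)
  fix f1 f2 assume f1: "f1 \<in> carrier FP" and f2: "f2 \<in> carrier FP"
    and eq: "inflate f1 = inflate f2"
  have "f1 (cl g) = f2 (cl g)" if "g \<in> carrier G" for g
    using fun_cong[OF eq, of g] that by (simp add: inflate_def)
  then have on_P: "f1 U = f2 U" if "U \<in> carrier P" for U
    using that by (auto simp: carrier_P)
  show "f1 = f2"
  proof
    fix U show "f1 U = f2 U"
      using f1 f2 on_P
      by (cases "U \<in> carrier P") (auto simp: fun_group_def PiE_def extensional_def)
  qed
qed

text \<open>A map on \<open>G\<close> that is invariant under left translation by \<open>N\<close> is an inflation:
  it is the inflation of the map sending a coset to the value at any of its elements.\<close>
lemma invariant_map_is_inflation:
  assumes c: "c \<in> carrier G \<rightarrow>\<^sub>E carrier M"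
    and inv: "\<And>m h. m \<in> carrier Mv \<Longrightarrow> h \<in> carrier G \<Longrightarrow> c (mu m \<otimes>\<^bsub>G\<^esub> h) = c h"
  obtains f where "f \<in> carrier FP" and "c = inflate f"
proof -
  define f where "f = (\<lambda>U\<in>carrier P. c (SOME g. g \<in> U))"
  have f_cl: "f (cl g) = c g" if g: "g \<in> carrier G" for g
  proof -
    have "g \<in> cl g" using G.rcos_self[OF g G.subgroup_axioms] by (simp add: cls_def)
    then have "(SOME g'. g' \<in> cl g) \<in> cl g" by (rule someI)
    then obtain m where "m \<in> carrier Mv" "(SOME g'. g' \<in> cl g) = mu m \<otimes>\<^bsub>G\<^esub> g"
      by (auto simp: cls_def r_coset_def)
    then show ?thesis using g inv cls_carrier[OF g] by (simp add: f_def)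
  qed
  have "f U \<in> carrier M" if "U \<in> carrier P" for U
    using that c f_cl by (auto simp: carrier_P)
  then have "f \<in> carrier FP" by (simp add: fun_group_def f_def)
  moreover have "c = inflate f"
  proof
    fix g show "c g = inflate f g"
      using c f_cl by (cases "g \<in> carrier G") (auto simp: inflate_def PiE_def extensional_def)
  qed
  ultimately show thesis by (rule that)
qed

lemma Z1_cm_alt:
  "c \<in> Z1_cm G Mv mu M rho \<longleftrightarrow>
    c \<in> carrier G \<rightarrow>\<^sub>E carrier M \<and>
    (\<forall>m\<in>carrier Mv. \<forall>h\<in>carrier G. \<forall>g\<in>carrier G.
       c (h \<otimes>\<^bsub>G\<^esub> g) = c (mu m \<otimes>\<^bsub>G\<^esub> h) \<otimes>\<^bsub>M\<^esub> rho (cl h) (c g))"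
proof (cases "c \<in> carrier G \<rightarrow>\<^sub>E carrier M")
  case c: True
  have "c (mu m \<otimes>\<^bsub>G\<^esub> h) \<otimes>\<^bsub>M\<^esub> inv\<^bsub>M\<^esub> (c (h \<otimes>\<^bsub>G\<^esub> g)) \<otimes>\<^bsub>M\<^esub> rho (cl h) (c g) = \<one>\<^bsub>M\<^esub>
      \<longleftrightarrow> c (h \<otimes>\<^bsub>G\<^esub> g) = c (mu m \<otimes>\<^bsub>G\<^esub> h) \<otimes>\<^bsub>M\<^esub> rho (cl h) (c g)"
    if "m \<in> carrier Mv" "h \<in> carrier G" "g \<in> carrier G" for m h g
  proof (rule M.diff_add_eq_one_iff)
    show "c (mu m \<otimes>\<^bsub>G\<^esub> h) \<in> carrier M" "c (h \<otimes>\<^bsub>G\<^esub> g) \<in> carrier M"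
      using c that by (auto simp: mu_closed)
    show "rho (cl h) (c g) \<in> carrier M"
      using c that by (auto intro: rho_closed cls_carrier)
  qed
  then show ?thesis using c by (simp add: Z1_cm_def)
qed (simp add: Z1_cm_def)

text \<open>The crossed-module 1-cocycles are the crossed homomorphisms \<open>G \<rightarrow> M\<close> (for the
  action through \<open>\<pi>\<^sub>0(V)\<close>) that are invariant under left translation by \<open>N\<close>: put
  \<open>\<mu>(m) = 1\<close> to get the first property and \<open>g = 1\<close> to get the second.\<close>
lemma Z1_cm_iff:
  "c \<in> Z1_cm G Mv mu M rho \<longleftrightarrow>
    c \<in> carrier G \<rightarrow>\<^sub>E carrier M \<and>
    (\<forall>h\<in>carrier G. \<forall>g\<in>carrier G. c (h \<otimes>\<^bsub>G\<^esub> g) = c h \<otimes>\<^bsub>M\<^esub> rho (cl h) (c g)) \<and>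
    (\<forall>m\<in>carrier Mv. \<forall>h\<in>carrier G. c (mu m \<otimes>\<^bsub>G\<^esub> h) = c h)"
  (is "_ \<longleftrightarrow> ?maps \<and> ?crossed \<and> ?invariant")
proof
  assume "c \<in> Z1_cm G Mv mu M rho"
  then have c: ?maps
    and cocycle: "\<And>m h g. m \<in> carrier Mv \<Longrightarrow> h \<in> carrier G \<Longrightarrow> g \<in> carrier G \<Longrightarrow>
       c (h \<otimes>\<^bsub>G\<^esub> g) = c (mu m \<otimes>\<^bsub>G\<^esub> h) \<otimes>\<^bsub>M\<^esub> rho (cl h) (c g)"
    unfolding Z1_cm_alt by blast+
  have cM: "c g \<in> carrier M" if "g \<in> carrier G" for g
    using c that by (rule PiE_mem)
  obtain m1 where m1: "m1 \<in> carrier Mv" "mu m1 = \<one>\<^bsub>G\<^esub>"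
    using subgroup.one_closed[OF G.subgroup_axioms] by (metis imageE)
  have crossed: "c (h \<otimes>\<^bsub>G\<^esub> g) = c h \<otimes>\<^bsub>M\<^esub> rho (cl h) (c g)"
    if "h \<in> carrier G" "g \<in> carrier G" for h g
    using cocycle[OF m1(1) that] m1(2) that(1) by simp
  have "c \<one>\<^bsub>G\<^esub> \<otimes>\<^bsub>M\<^esub> c \<one>\<^bsub>G\<^esub> = c \<one>\<^bsub>G\<^esub> \<otimes>\<^bsub>M\<^esub> \<one>\<^bsub>M\<^esub>"
    using crossed[OF G.one_closed G.one_closed] by (simp add: cls_one rho_unit cM)
  then have c_one: "c \<one>\<^bsub>G\<^esub> = \<one>\<^bsub>M\<^esub>"
    using cM[OF G.one_closed] by (simp add: M.l_cancel)
  have "c (mu m \<otimes>\<^bsub>G\<^esub> h) = c h" if m: "m \<in> carrier Mv" and h: "h \<in> carrier G" for m h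
    using cocycle[OF m h G.one_closed] h mu_closed[OF m] by (simp add: c_one rho_one cls_carrier cM)
  then show "?maps \<and> ?crossed \<and> ?invariant" using c crossed by blast
next
  assume H: "?maps \<and> ?crossed \<and> ?invariant"
  have "c (h \<otimes>\<^bsub>G\<^esub> g) = c (mu m \<otimes>\<^bsub>G\<^esub> h) \<otimes>\<^bsub>M\<^esub> rho (cl h) (c g)"
    if "m \<in> carrier Mv" "h \<in> carrier G" "g \<in> carrier G" for m h g
    using H that by metis
  then show "c \<in> Z1_cm G Mv mu M rho" unfolding Z1_cm_alt using H by blast
qed

lemma Z1_cm_eq_inflate: "Z1_cm G Mv mu M rho = inflate ` Z1_grp P M rho"
proof
  show "inflate ` Z1_grp P M rho \<subseteq> Z1_cm G Mv mu M rho"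
  proof
    fix c assume "c \<in> inflate ` Z1_grp P M rho"
    then obtain f where f: "f \<in> Z1_grp P M rho" and c_eq: "c = inflate f" by blast
    have "c \<in> carrier G \<rightarrow>\<^sub>E carrier M"
      using f c_eq inflate_hom by (auto simp: Z1_grp_def hom_def fun_group_def)
    moreover have "c (h \<otimes>\<^bsub>G\<^esub> g) = c h \<otimes>\<^bsub>M\<^esub> rho (cl h) (c g)"
      if "h \<in> carrier G" "g \<in> carrier G" for h g
      using f that by (simp add: c_eq inflate_def Z1_grp_def cls_mult cls_carrier)
    moreover have "c (mu m \<otimes>\<^bsub>G\<^esub> h) = c h" if "m \<in> carrier Mv" "h \<in> carrier G" for m h
      using that by (simp add: c_eq inflate_def mu_closed cls_translate)
    ultimately show "c \<in> Z1_cm G Mv mu M rho" by (simp add: Z1_cm_iff)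
  qed
  show "Z1_cm G Mv mu M rho \<subseteq> inflate ` Z1_grp P M rho"
  proof
    fix c assume "c \<in> Z1_cm G Mv mu M rho"
    then have c: "c \<in> carrier G \<rightarrow>\<^sub>E carrier M"
      and crossed: "\<And>h g. h \<in> carrier G \<Longrightarrow> g \<in> carrier G \<Longrightarrow>
          c (h \<otimes>\<^bsub>G\<^esub> g) = c h \<otimes>\<^bsub>M\<^esub> rho (cl h) (c g)"
      and inv: "\<And>m h. m \<in> carrier Mv \<Longrightarrow> h \<in> carrier G \<Longrightarrow> c (mu m \<otimes>\<^bsub>G\<^esub> h) = c h"
      by (auto simp: Z1_cm_iff)
    obtain f where f: "f \<in> carrier FP" and c_eq: "c = inflate f"
      using invariant_map_is_inflation[OF c inv] by blast
    have f_cl: "f (cl g) = c g" if "g \<in> carrier G" for g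
      using that by (simp add: c_eq inflate_def)
    have "f (U \<otimes>\<^bsub>P\<^esub> V) = f U \<otimes>\<^bsub>M\<^esub> rho U (f V)" if U: "U \<in> carrier P" and V: "V \<in> carrier P" for U V
    proof -
      obtain h where h: "h \<in> carrier G" "U = cl h"
        using U by (auto simp: carrier_P)
      obtain g where g: "g \<in> carrier G" "V = cl g"
        using V by (auto simp: carrier_P)
      have "f (U \<otimes>\<^bsub>P\<^esub> V) = c (h \<otimes>\<^bsub>G\<^esub> g)"
        using h g by (simp add: cls_mult[symmetric] f_cl)
      also have "\<dots> = f U \<otimes>\<^bsub>M\<^esub> rho U (f V)"
        using h g by (simp add: crossed f_cl)
      finally show ?thesis .
    qed
    then have "f \<in> Z1_grp P M rho"
      using f by (simp add: Z1_grp_def fun_group_def)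
    then show "c \<in> inflate ` Z1_grp P M rho" using c_eq by blast
  qed
qed

lemma inflate_principal:
  assumes "a \<in> carrier M"
  shows "inflate (principal (inv\<^bsub>M\<^esub> a)) = (\<lambda>g\<in>carrier G. a \<otimes>\<^bsub>M\<^esub> inv\<^bsub>M\<^esub> (rho (cl g) a))"
  using assms by (auto simp: inflate_def principal_def cls_carrier rho_inv rho_closed M.m_comm
      intro!: ext)

lemma B1_cm_eq_inflate: "B1_cm G Mv mu M rho = inflate ` B1_grp P M rho"
proof -
  have "B1_cm G Mv mu M rho = (\<lambda>a. inflate (principal (inv\<^bsub>M\<^esub> a))) ` carrier M"
    by (auto simp: B1_cm_def inflate_principal)
  also have "\<dots> = inflate ` principal ` (\<lambda>a. inv\<^bsub>M\<^esub> a) ` carrier M"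
    by (simp add: image_comp)
  also have "(\<lambda>a. inv\<^bsub>M\<^esub> a) ` carrier M = carrier M"
  proof (intro equalityI subsetI)
    fix a assume "a \<in> carrier M"
    then show "a \<in> (\<lambda>a. inv\<^bsub>M\<^esub> a) ` carrier M"
      by (intro image_eqI[of a _ "inv\<^bsub>M\<^esub> a"]) simp_all
  qed auto
  finally show ?thesis by (simp add: B1_grp_eq)
qed

theorem H1_iso: "H1_cm G Mv mu M rho \<cong> H1_grp P M rho"
proof -
  have FP: "comm_group FP" and FG: "comm_group FG"
    by (rule comm_group_fun_group[OF M.comm_group_axioms])+
  have "H1_grp P M rho \<cong> H1_cm G Mv mu M rho"
    using iso_subquotient_image[OF FP FG inflate_hom inflate_inj
        Z1_grp_subgroup B1_grp_subgroup B1_grp_subset_Z1_grp]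
    by (simp add: H1_grp_def H1_cm_def Z1_cm_eq_inflate B1_cm_eq_inflate)
  moreover have "group (H1_grp P M rho)"
    unfolding H1_grp_def
    by (rule normal.factorgroup_is_group, rule comm_group.subgroup_normal_in_subgroup[OF FP
        B1_grp_subgroup Z1_grp_subgroup B1_grp_subset_Z1_grp])
  ultimately show ?thesis by (rule group.iso_sym[rotated])
qed

end

theorem corollary3p7:
  fixes G :: "('g, 'x) monoid_scheme" and Mv :: "('m, 'y) monoid_scheme"
    and act :: "'g \<Rightarrow> 'm \<Rightarrow> 'm" and mu :: "'m \<Rightarrow> 'g"
    and M :: "('a, 'z) monoid_scheme" and rho :: "'g set \<Rightarrow> 'a \<Rightarrow> 'a"
  assumes "crossed_module G Mv act mu"
    and "group_module (pi0 G Mv mu) M rho"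
  shows "H1_cm G Mv mu M rho \<cong> H1_grp (pi0 G Mv mu) M rho"
proof -
  interpret inflation G Mv mu M rho
    by (rule inflation.intro[OF crossed_module_image_normal[OF assms(1)] assms(2)])
  show ?thesis by (rule H1_iso)
qed

end
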